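(* Let $s\ge 0$ be a fixed integer (independent of $N$). For every integer $N$ with $s<N-2$, set $n=N-s$ and let $\mathcal{X}_n=\{x_j\}_{j=0}^n$ be any subset with $n+1$ elements of the Chebyshev points of the second kind $\{\cos\frac{k\pi}{N}\}_{k=0}^N$, ordered so that $x_0>x_1>\dots>x_n$. Then the family $(\mathcal{X}_n)$ is a family of well-spaced points with constants $C=\frac{\pi^2(s+1)}{2}$ and $R=\frac{(s+1)(s+3)\pi^2}{4}$; that is, for every such $\mathcal{X}_n$: (1) $\frac{x_{k+1}-x_k}{x_{k+1}-x_j}\le \frac{C}{k+1-j}$ for $0\le j\le k$, $0\le k\le n-1$; (2) $\frac{x_{k+1}-x_k}{x_j-x_k}\le\frac{C}{j-k}$ for $k+1\le j\le n$, $0\le k\le n-1$; (3) $\frac1R\le \frac{x_{k+1}-x_k}{x_k-x_{k-1}}\le R$ for $1\le k\le n-1$. Moreover, the Lebesgue constant of Berrut's rational interpolant on $\mathcal{X}_n$ satisfies $$\Lambda_n\le\Big(\frac{(s+1)(s+3)\pi^2}{4}+1\Big)\big(1+\pi^2(s+1)\ln(N-s)\big).$$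
   Context: Berrut's rational interpolant on distinct nodes $x_0,\dots,x_n$ has basis functions $\ell_i(x)=\dfrac{(-1)^i/(x-x_i)}{\sum_{j=0}^n (-1)^j/(x-x_j)}$, $i=0,\dots,n$. Its Lebesgue constant on $[-1,1]$ is $\Lambda_n=\max_{x\in[-1,1]}\sum_{i=0}^n|\ell_i(x)|$. A family of ordered node sets $(\mathcal{X}_n)_n$ is called well-spaced if there exist constants $C,R\ge 1$ independent of $n$ such that conditions (1)–(3) in the claim hold for every set in the family. *)

theory Defs
  imports Complex_Main
begin

definition berrut_basis :: "(nat \<Rightarrow> real) \<Rightarrow> nat \<Rightarrow> nat \<Rightarrow> real \<Rightarrow> real" where
  "berrut_basis x n i t =
     ((-1) ^ i / (t - x i)) / (\<Sum>j=0..n. (-1) ^ j / (t - x j))"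

text \<open>Lebesgue function, for t not a node (at nodes the basis functions are
  extended by continuity; the supremum over non-nodes equals the maximum).\<close>
definition berrut_lebesgue_fun :: "(nat \<Rightarrow> real) \<Rightarrow> nat \<Rightarrow> real \<Rightarrow> real" where
  "berrut_lebesgue_fun x n t = (\<Sum>i=0..n. \<bar>berrut_basis x n i t\<bar>)"

definition berrut_lebesgue_const :: "(nat \<Rightarrow> real) \<Rightarrow> nat \<Rightarrow> real" where
  "berrut_lebesgue_const x n =
     Sup (berrut_lebesgue_fun x n ` ({-1..1} - x ` {0..n}))"

definition well_spaced_conds :: "real \<Rightarrow> real \<Rightarrow> (nat \<Rightarrow> real) \<Rightarrow> nat \<Rightarrow> bool" where
  "well_spaced_conds C R x n \<longleftrightarrow>
     (\<forall>k<n. \<forall>j\<le>k. (x (k+1) - x k) / (x (k+1) - x j) \<le> C / (real k + 1 - real j)) \<and>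
     (\<forall>k<n. \<forall>j. k+1 \<le> j \<and> j \<le> n \<longrightarrow> (x (k+1) - x k) / (x j - x k) \<le> C / (real j - real k)) \<and>
     (\<forall>k. 1 \<le> k \<and> k \<le> n-1 \<longrightarrow>
        1 / R \<le> (x (k+1) - x k) / (x k - x (k-1)) \<and> (x (k+1) - x k) / (x k - x (k-1)) \<le> R)"

end

(*
  Write the nodes as x_j = cos theta_j.  For n + 1 of the N + 1 Chebyshev points cos (k pi / N),
  consecutive angles differ by at least u = pi / N and at most (s + 1) u, and the first and last
  angles lie within s u of 0 and pi; nothing else about the nodes is used.

  The analytic tool is the two-sided estimate
    4 / pi^2 * (b - a) * m(a, b) <= cos a - cos b <= (b - a) * m(a, b),
  where m(a, b) = edge_dist a b is the distance of (a + b) / 2 to {0, pi}; it follows from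
  cos a - cos b = 2 sin m(a, b) sin ((b - a) / 2), sin t <= t and Jordan's inequality.
  Comparing m on nested or adjacent angle intervals gives the three well-spacedness conditions.

  At t = cos phi between x_(k+1) and x_k, the denominator of Berrut's basis functions splits into
  two alternating sums of reciprocals of increasing distances, each bounded below by its first
  terms.  Hence the two nearest nodes contribute at most R + 1, with R = (s + 1) (s + 3) pi^2 / 4,
  to the Lebesgue function, and any other node at most a constant divided by its index distance
  to k; these contributions add up to harmonic numbers, which are at most 1 + ln n.  The reflection
  theta -> pi - theta reduces everything to phi nearer to theta_(k+1), or to phi before the first
  node.
*)

theory Submission
  imports Defs "HOL-Analysis.Harmonic_Numbers"
begin

section \<open>Differences of cosines\<close>

lemma jordan_inequality:
  fixes x :: real
  assumes "0 \<le> x" "x \<le> pi/2"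
  shows "2 * x / pi \<le> sin x"
proof -
  define h where "h = (\<lambda>x::real. sin x - 2 * x / pi)"
  define x0 where "x0 = arccos (2/pi)"
  have "2/pi \<le> 1" "-1 \<le> 2/pi" using pi_ge_two by (auto simp: field_simps)
  then have x0: "0 \<le> x0" "x0 \<le> pi" and cos_x0: "cos x0 = 2/pi"
    using arccos_lbound arccos_ubound by (auto simp: x0_def)
  then have x0_le: "x0 \<le> pi/2" using cos_mono_le_eq[of "pi/2" x0] by simp
  have h_deriv: "(h has_real_derivative (cos v - 2/pi)) (at v)" for v
    unfolding h_def by (auto intro!: derivative_eq_intros)
  show ?thesis
  proof (cases "x \<le> x0")
    case True
    have "h 0 \<le> h x"
    proof (rule DERIV_nonneg_imp_nondecreasing[OF assms(1)])
      fix v assume "0 \<le> v" "v \<le> x"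
      then have "cos x0 \<le> cos v" using True x0 x0_le by (intro cos_monotone_0_pi_le) auto
      then show "\<exists>y. (h has_real_derivative y) (at v) \<and> 0 \<le> y" using h_deriv cos_x0 by force
    qed
    then show ?thesis by (simp add: h_def)
  next
    case False
    have "h (pi/2) \<le> h x"
    proof (rule DERIV_nonpos_imp_nonincreasing[OF assms(2)])
      fix v assume "x \<le> v" "v \<le> pi/2"
      then have "cos v \<le> cos x0" using False x0 x0_le by (intro cos_monotone_0_pi_le) auto
      then show "\<exists>y. (h has_real_derivative y) (at v) \<and> y \<le> 0" using h_deriv cos_x0 by force
    qed
    then show ?thesis by (simp add: h_def)
  qed
qed

definition edge_dist :: "real \<Rightarrow> real \<Rightarrow> real" where
  "edge_dist a b = min ((a + b) / 2) (pi - (a + b) / 2)"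

lemma edge_dist_le_mult:
  assumes "0 \<le> K" "c + d \<le> K * (a + b)" "2 * pi - (c + d) \<le> K * (2 * pi - (a + b))"
  shows "edge_dist c d \<le> K * edge_dist a b"
  using assms unfolding edge_dist_def min_def by (auto simp: field_simps)

lemma cos_diff_eq_edge_dist:
  assumes "0 \<le> a" "a \<le> b" "b \<le> pi"
  shows "cos a - cos b = 2 * sin (edge_dist a b) * sin ((b - a) / 2)"
    and "0 \<le> edge_dist a b" "edge_dist a b \<le> pi / 2"
proof -
  have "sin ((a + b) / 2) = sin (edge_dist a b)"
    unfolding edge_dist_def by (auto simp: min_def sin_pi_minus)
  then show "cos a - cos b = 2 * sin (edge_dist a b) * sin ((b - a) / 2)"
    using cos_diff_cos[of a b] by simp
  show "0 \<le> edge_dist a b" "edge_dist a b \<le> pi / 2"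
    using assms unfolding edge_dist_def min_def by (auto simp: field_simps)
qed

lemma cos_diff_le_edge_dist:
  assumes "0 \<le> a" "a \<le> b" "b \<le> pi"
  shows "cos a - cos b \<le> (b - a) * edge_dist a b"
proof -
  note e = cos_diff_eq_edge_dist[OF assms]
  have "sin (edge_dist a b) \<le> edge_dist a b" "0 \<le> sin (edge_dist a b)"
    using e sin_x_le_x by (auto intro!: sin_ge_zero)
  moreover have "sin ((b - a) / 2) \<le> (b - a) / 2" "0 \<le> sin ((b - a) / 2)"
    using assms sin_x_le_x[of "(b - a) / 2"] by (auto intro!: sin_ge_zero)
  ultimately have "2 * sin (edge_dist a b) * sin ((b - a) / 2) \<le> 2 * edge_dist a b * ((b - a) / 2)"
    by (intro mult_mono) auto
  then show ?thesis using e by (simp add: algebra_simps)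
qed

lemma cos_diff_ge_edge_dist:
  assumes "0 \<le> a" "a \<le> b" "b \<le> pi"
  shows "4 / pi^2 * (b - a) * edge_dist a b \<le> cos a - cos b"
proof -
  note e = cos_diff_eq_edge_dist[OF assms]
  have s1: "2 * edge_dist a b / pi \<le> sin (edge_dist a b)"
    using e by (intro jordan_inequality) auto
  have s2: "2 * ((b - a) / 2) / pi \<le> sin ((b - a) / 2)"
    using assms by (intro jordan_inequality) auto
  have "0 \<le> 2 * edge_dist a b / pi" "0 \<le> 2 * ((b - a) / 2) / pi" using e assms by auto
  then have "2 * (2 * edge_dist a b / pi) * (2 * ((b - a) / 2) / pi)
      \<le> 2 * sin (edge_dist a b) * sin ((b - a) / 2)"
    using s1 s2 by (intro mult_mono) auto
  then show ?thesis using e by (simp add: power2_eq_square field_simps)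
qed

lemma cos_diff_inner_left:
  assumes "0 \<le> a" "a \<le> b" "b \<le> c" "c \<le> pi"
  shows "(cos a - cos b) * (c - a) \<le> pi^2 / 2 * (b - a) * (cos a - cos c)"
proof -
  have "cos a - cos b \<le> (b - a) * edge_dist a b"
    using assms by (intro cos_diff_le_edge_dist) auto
  also have "\<dots> \<le> (b - a) * (2 * edge_dist a c)"
    using assms by (intro mult_left_mono edge_dist_le_mult) auto
  finally have "(cos a - cos b) * (c - a) \<le> (b - a) * (2 * edge_dist a c) * (c - a)"
    using assms by (intro mult_right_mono) auto
  also have "\<dots> = 2 * (b - a) * ((c - a) * edge_dist a c)"
    by (simp add: algebra_simps)
  also have "\<dots> \<le> 2 * (b - a) * (pi^2 / 4 * (cos a - cos c))"
    using cos_diff_ge_edge_dist[of a c] assms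
    by (intro mult_left_mono) (auto simp: field_simps)
  finally show ?thesis by (simp add: field_simps)
qed

lemma cos_diff_inner_right:
  assumes "0 \<le> a" "a \<le> b" "b \<le> c" "c \<le> pi"
  shows "(cos b - cos c) * (c - a) \<le> pi^2 / 2 * (c - b) * (cos a - cos c)"
  using cos_diff_inner_left[of "pi - c" "pi - b" "pi - a"] assms by (simp add: algebra_simps)

lemma cos_diff_far_left:
  assumes "0 \<le> a" "a \<le> f" "f \<le> q" "q \<le> pi" "q \<le> 2 * f"
  shows "(cos f - cos q) * (f - a) \<le> 3 * pi^2 / 4 * (q - f) * (cos a - cos f)"
proof -
  have "cos f - cos q \<le> (q - f) * edge_dist f q"
    using assms by (intro cos_diff_le_edge_dist) auto
  also have "\<dots> \<le> (q - f) * (3 * edge_dist a f)"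
    using assms by (intro mult_left_mono edge_dist_le_mult) auto
  finally have "(cos f - cos q) * (f - a) \<le> (q - f) * (3 * edge_dist a f) * (f - a)"
    using assms by (intro mult_right_mono) auto
  also have "\<dots> = 3 * (q - f) * ((f - a) * edge_dist a f)"
    by (simp add: algebra_simps)
  also have "\<dots> \<le> 3 * (q - f) * (pi^2 / 4 * (cos a - cos f))"
    using cos_diff_ge_edge_dist[of a f] assms
    by (intro mult_left_mono) (auto simp: field_simps)
  finally show ?thesis by (simp add: field_simps)
qed

lemma cos_gap_ratio_le:
  assumes "0 \<le> a" "0 < u" "0 \<le> S" "a + u \<le> b" "b + u \<le> c" "c \<le> pi"
    and "b - a \<le> (S + 1) * u" "c - b \<le> (S + 1) * u"
  shows "cos b - cos c \<le> (S + 1) * (S + 3) * pi^2 / 4 * (cos a - cos b)"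
proof -
  have "c \<le> b + (S + 1) * b"
    using assms mult_left_mono[of u b "S + 1"] by linarith
  then have "b + c \<le> (S + 3) * b" by (simp add: algebra_simps)
  also have "\<dots> \<le> (S + 3) * (a + b)"
    using assms by (intro mult_left_mono) auto
  finally have mid: "b + c \<le> (S + 3) * (a + b)" .
  have "2 * pi - (b + c) \<le> 1 * (2 * pi - (a + b))" using assms by simp
  also have "\<dots> \<le> (S + 3) * (2 * pi - (a + b))"
    using assms by (intro mult_right_mono) auto
  finally have "edge_dist b c \<le> (S + 3) * edge_dist a b"
    using mid assms by (intro edge_dist_le_mult) auto
  note edge = this
  have "cos b - cos c \<le> (c - b) * edge_dist b c"
    using assms by (intro cos_diff_le_edge_dist) auto
  also have "\<dots> \<le> ((S + 1) * u) * ((S + 3) * edge_dist a b)"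
    using assms edge cos_diff_eq_edge_dist(2)[of b c] by (intro mult_mono) auto
  also have "\<dots> = (S + 1) * (S + 3) * (u * edge_dist a b)"
    by (simp add: algebra_simps)
  also have "\<dots> \<le> (S + 1) * (S + 3) * ((b - a) * edge_dist a b)"
    using assms cos_diff_eq_edge_dist(2)[of a b] by (intro mult_left_mono mult_right_mono) auto
  also have "\<dots> \<le> (S + 1) * (S + 3) * (pi^2 / 4 * (cos a - cos b))"
    using cos_diff_ge_edge_dist[of a b] assms
    by (intro mult_left_mono) (auto simp: field_simps)
  finally show ?thesis by (simp add: field_simps)
qed

lemma cos_gap_ratio_ge:
  assumes "0 \<le> a" "0 < u" "0 \<le> S" "a + u \<le> b" "b + u \<le> c" "c \<le> pi"
    and "b - a \<le> (S + 1) * u" "c - b \<le> (S + 1) * u"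
  shows "cos a - cos b \<le> (S + 1) * (S + 3) * pi^2 / 4 * (cos b - cos c)"
  using cos_gap_ratio_le[of "pi - c" u S "pi - b" "pi - a"] assms by (simp add: algebra_simps)

lemma edge_dist_shift_le:
  assumes "0 \<le> f" "f \<le> q" "q < q'" "q' \<le> pi"
  shows "edge_dist f q' \<le> (q' - f) / (q' - q) * edge_dist q q'"
proof (rule edge_dist_le_mult)
  have "1 * (q + q') \<le> (q' - f) / (q' - q) * (q + q')"
    using assms by (intro mult_right_mono) auto
  then show "f + q' \<le> (q' - f) / (q' - q) * (q + q')" using assms by simp
  have "(q - f) * (q' - q) \<le> (q - f) * (2 * pi - (q + q'))"
    using assms by (intro mult_left_mono) auto
  then show "2 * pi - (f + q') \<le> (q' - f) / (q' - q) * (2 * pi - (q + q'))"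
    using assms by (simp add: field_simps)
qed (use assms in auto)

lemma cos_recip_gap_ge:
  assumes "0 \<le> f" "f < q" "q < q'" "q' \<le> pi" "0 \<le> K" "q - f \<le> K * (q' - q)"
  shows "4 / (pi^2 * (K + 1)^2) / (cos f - cos q) \<le> 1 / (cos f - cos q) - 1 / (cos f - cos q')"
proof -
  define A B d g where "A = cos f - cos q" "B = cos f - cos q'" "d = q - f" "g = q' - q"
  have dg: "0 < d" "0 < g" using assms by (auto simp: A_B_d_g_def)
  have A: "0 < A" "A < B"
    using assms cos_monotone_0_pi[of f q] cos_monotone_0_pi[of q q'] by (auto simp: A_B_d_g_def)
  have edge: "edge_dist f q' \<le> (d + g) / g * edge_dist q q'"
    using edge_dist_shift_le[of f q q'] assms by (simp add: A_B_d_g_def)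
  have "B \<le> (d + g) * edge_dist f q'"
    using cos_diff_le_edge_dist[of f q'] assms by (simp add: A_B_d_g_def)
  also have "\<dots> \<le> (d + g) * ((d + g) / g * edge_dist q q')"
    using edge dg by (intro mult_left_mono) auto
  finally have "4 / pi^2 * g^2 * B \<le> 4 / pi^2 * g^2 * ((d + g) * ((d + g) / g * edge_dist q q'))"
    by (intro mult_left_mono) auto
  also have "\<dots> = (d + g)^2 * (4 / pi^2 * g * edge_dist q q')"
    using dg by (simp add: power2_eq_square field_simps)
  also have "\<dots> \<le> (d + g)^2 * (B - A)"
    using cos_diff_ge_edge_dist[of q q'] assms by (intro mult_left_mono) (auto simp: A_B_d_g_def)
  finally have key: "4 / pi^2 * g^2 * B \<le> (d + g)^2 * (B - A)" .
  have "(d + g)^2 \<le> ((K + 1) * g)^2"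
    using assms dg by (intro power_mono) (auto simp: A_B_d_g_def algebra_simps)
  then have "4 / pi^2 * (d + g)^2 * B \<le> 4 / pi^2 * ((K + 1) * g)^2 * B"
    using A by (intro mult_right_mono mult_left_mono) auto
  also have "\<dots> = (K + 1)^2 * (4 / pi^2 * g^2 * B)"
    by (simp add: power_mult_distrib)
  also have "\<dots> \<le> (K + 1)^2 * ((d + g)^2 * (B - A))"
    using key by (rule mult_left_mono) simp
  finally have "(d + g)^2 * (4 / pi^2 * B) \<le> (d + g)^2 * ((K + 1)^2 * (B - A))"
    by (simp add: algebra_simps)
  moreover have "0 < (d + g)^2" using dg by simp
  ultimately have "4 / pi^2 * B \<le> (K + 1)^2 * (B - A)"
    by (rule mult_left_le_imp_le)
  then have "4 / (pi^2 * (K + 1)^2) * B \<le> B - A"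
    using assms by (simp add: field_simps)
  then show ?thesis
    using A by (simp add: A_B_d_g_def[symmetric] field_simps)
qed

lemma jordan_const_le_one:
  assumes "0 \<le> K"
  shows "4 / (pi^2 * (K + 1)^2) \<le> 1"
proof -
  have "2^2 \<le> pi^2" using pi_ge_two by (intro power_mono) auto
  moreover have "1 \<le> (K + 1)^2" using assms by simp
  ultimately have "4 * 1 \<le> pi^2 * (K + 1)^2" by (intro mult_mono) auto
  then show ?thesis by simp
qed

section \<open>Alternating sums and the Lebesgue function\<close>

lemma alternating_sum_bounds:
  fixes f :: "nat \<Rightarrow> real"
  assumes "\<forall>i\<le>m. 0 \<le> f i" "\<forall>i<m. f (Suc i) \<le> f i"
  shows "0 \<le> (\<Sum>i=0..m. (-1)^i * f i) \<and> (\<Sum>i=0..m. (-1)^i * f i) \<le> f 0 \<and>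
         (0 < m \<longrightarrow> f 0 - f 1 \<le> (\<Sum>i=0..m. (-1)^i * f i))"
  using assms
proof (induction m arbitrary: f)
  case 0
  then show ?case by simp
next
  case (Suc m)
  have "(\<Sum>i=0..Suc m. (-1)^i * f i) = f 0 - (\<Sum>i=0..m. (-1)^i * f (Suc i))"
    by (subst sum.atLeast0_atMost_Suc_shift) (simp add: sum_negf)
  moreover have "f 1 \<le> f 0" "0 \<le> f 1" using Suc.prems by auto
  moreover note Suc.IH[of "\<lambda>i. f (Suc i)"] Suc.prems
  ultimately show ?case by auto
qed

lemma alternating_recip_sum_ge:
  fixes y :: "nat \<Rightarrow> real"
  assumes "0 < y 0" "\<forall>i<m. y i < y (Suc i)" "0 \<le> c" "c \<le> 1"
    and "0 < m \<Longrightarrow> c / y 0 \<le> 1 / y 0 - 1 / y 1"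
  shows "c / y 0 \<le> (\<Sum>i=0..m. (-1)^i / y i)"
proof -
  have pos: "0 < y i" if "i \<le> m" for i
    using that
  proof (induction i)
    case (Suc i)
    then show ?case using assms(2) by (meson Suc_le_lessD less_imp_le_nat less_trans)
  qed (use assms in simp)
  have "\<forall>i<m. 1 / y (Suc i) \<le> 1 / y i"
    using assms pos by (auto intro!: divide_left_mono simp: less_imp_le)
  then have alt: "0 \<le> (\<Sum>i=0..m. (-1)^i * (1 / y i)) \<and> (0 < m \<longrightarrow>
      1 / y 0 - 1 / y 1 \<le> (\<Sum>i=0..m. (-1)^i * (1 / y i)))"
    using alternating_sum_bounds[of m "\<lambda>i. 1 / y i"] pos by (auto simp: less_imp_le)
  show ?thesis
  proof (cases "m = 0")
    case True
    then show ?thesis using assms by (simp add: divide_right_mono)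
  next
    case False
    then show ?thesis using alt assms(5) by simp
  qed
qed

lemma recip_diff_ge:
  fixes d a R :: real
  assumes "0 < d" "0 < a" "0 \<le> R" "d \<le> R * a"
  shows "1 / (R + 1) / d \<le> 1 / d - 1 / (d + a)"
proof -
  have "d + a \<le> (R + 1) * a" using assms by (simp add: algebra_simps)
  then have "a / (d * ((R + 1) * a)) \<le> a / (d * (d + a))"
    using assms by (intro divide_left_mono mult_left_mono) auto
  moreover have "1 / (R + 1) / d = a / (d * ((R + 1) * a))" using assms by simp
  moreover have "1 / d - 1 / (d + a) = a / (d * (d + a))" using assms by (simp add: field_simps)
  ultimately show ?thesis by simp
qed

lemma recip_div_le:
  fixes c d e K m D :: real
  assumes "0 < c" "0 < d" "0 < e" "0 < m" "c / e \<le> D" "e * m \<le> K * d"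
  shows "1 / d / D \<le> K / c / m"
proof -
  have "0 < D" using assms divide_pos_pos[of c e] by linarith
  then have "1 / d / D \<le> 1 / d / (c / e)"
    using assms by (intro divide_left_mono) auto
  also have "\<dots> = e * m / (c * m * d)" using assms by (simp add: field_simps)
  also have "\<dots> \<le> K * d / (c * m * d)"
    using assms by (intro divide_right_mono) auto
  also have "\<dots> = K / c / m" using assms by simp
  finally show ?thesis .
qed

lemma sum_scaled_recip_le_harm:
  assumes "0 \<le> K" "finite A" "inj_on g A" "g ` A \<subseteq> {1..n}"
  shows "(\<Sum>j\<in>A. K / real (g j)) \<le> K * harm n"
proof -
  have "(\<Sum>j\<in>A. K / real (g j)) = K * (\<Sum>i\<in>g ` A. 1 / real i)"
    using sum.reindex[OF assms(3), of "\<lambda>i. 1 / real i"] by (simp add: sum_distrib_left)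
  also have "\<dots> \<le> K * (\<Sum>i\<in>{1..n}. 1 / real i)"
    using assms by (intro mult_left_mono sum_mono2) auto
  finally show ?thesis by (simp add: harm_def inverse_eq_divide)
qed

lemma sum_split_pair:
  fixes g :: "nat \<Rightarrow> 'a::comm_monoid_add"
  assumes "k < n"
  shows "sum g {0..n} = sum g {0..<k} + g k + g (Suc k) + sum g {Suc (Suc k)..n}"
proof -
  have "{0..n} = {0..<Suc (Suc k)} \<union> {Suc (Suc k)..n}" using assms by auto
  then have "sum g {0..n} = sum g {0..<Suc (Suc k)} + sum g {Suc (Suc k)..n}"
    by (metis sum.union_disjoint finite_atLeastAtMost finite_atLeastLessThan
        ivl_disj_int_two(7))
  then show ?thesis by (simp add: add.assoc)
qed

lemma harm_le_one_plus_ln: "1 \<le> n \<Longrightarrow> harm n \<le> 1 + ln (real n)"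
  using euler_mascheroni_sequence_decreasing[of 1 n] by (simp add: harm_def)

lemma one_le_ln: "3 \<le> n \<Longrightarrow> 1 \<le> ln (real n)"
  using exp_le by (subst ln_ge_iff) auto

lemma berrut_lebesgue_fun_eq:
  "berrut_lebesgue_fun x n t =
     (\<Sum>j=0..n. 1 / \<bar>t - x j\<bar>) / \<bar>\<Sum>j=0..n. (-1)^j / (t - x j)\<bar>"
  unfolding berrut_lebesgue_fun_def berrut_basis_def sum_divide_distrib
  by (intro sum.cong) (auto simp: abs_mult power_abs)

lemma divide_diff_flip: "a / (b - t) = - (a / (t - b :: real))"
  by (metis divide_minus_right minus_diff_eq)

lemma neg_one_power_diff: "i \<le> k \<Longrightarrow> (-1::real)^(k - i) = (-1)^k * (-1)^i"
proof -
  assume "i \<le> k"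
  then have "(-1::real)^k = (-1)^(k - i) * (-1)^i" by (simp add: power_add[symmetric])
  then have "(-1::real)^k * (-1)^i = (-1)^(k - i) * ((-1)^i * (-1)^i)" by (simp add: algebra_simps)
  then show ?thesis by (simp add: power_add[symmetric])
qed

lemma berrut_lebesgue_fun_reflect:
  "berrut_lebesgue_fun (\<lambda>j. - x (n - j)) n (-t) = berrut_lebesgue_fun x n t"
proof -
  have "(\<Sum>j=0..n. 1 / \<bar>-t - - x (n - j)\<bar>) = (\<Sum>j=0..n. 1 / \<bar>t - x (n - j)\<bar>)"
    by (intro sum.cong) (auto simp: abs_minus_commute)
  also have "\<dots> = (\<Sum>j=0..n. 1 / \<bar>t - x j\<bar>)"
    using sum.atLeastAtMost_rev[of "\<lambda>j. 1 / \<bar>t - x j\<bar>" 0 n] by simp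
  finally have num: "(\<Sum>j=0..n. 1 / \<bar>-t - - x (n - j)\<bar>) = (\<Sum>j=0..n. 1 / \<bar>t - x j\<bar>)" .
  have "(\<Sum>j=0..n. (-1)^j / (-t - - x (n - j))) = (\<Sum>i=0..n. (-1)^(n - i) / (x i - t))"
    using sum.atLeastAtMost_rev[of "\<lambda>j. (-1)^j / (-t - - x (n - j))" 0 n]
    by (simp add: algebra_simps)
  also have "\<dots> = - ((-1)^n * (\<Sum>j=0..n. (-1)^j / (t - x j)))"
    unfolding sum_distrib_left sum_negf[symmetric]
    by (intro sum.cong) (auto simp: neg_one_power_diff divide_diff_flip[of _ _ t])
  finally have den: "\<bar>\<Sum>j=0..n. (-1)^j / (-t - - x (n - j))\<bar> = \<bar>\<Sum>j=0..n. (-1)^j / (t - x j)\<bar>"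
    by (simp add: abs_mult power_abs)
  show ?thesis unfolding berrut_lebesgue_fun_eq num den ..
qed

lemma berrut_denominator_split:
  fixes x :: "nat \<Rightarrow> real"
  assumes "k < n"
  shows "(\<Sum>j=0..n. (-1)^j / (t - x j)) = - ((-1)^k *
           ((\<Sum>i=0..k. (-1)^i / (x (k - i) - t)) + (\<Sum>i=0..n - Suc k. (-1)^i / (t - x (i + Suc k)))))"
proof -
  have "(\<Sum>j=0..n. (-1)^j / (t - x j)) =
      (\<Sum>j=0..k. (-1)^j / (t - x j)) + (\<Sum>j=Suc k..n. (-1)^j / (t - x j))"
    using sum.ub_add_nat[of 0 k "\<lambda>j. (-1)^j / (t - x j)" "n - k"] assms by simp
  moreover have "(\<Sum>j=0..k. (-1)^j / (t - x j)) = (\<Sum>i=0..k. (-1)^(k - i) / (t - x (k - i)))"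
    using sum.atLeastAtMost_rev[of "\<lambda>j. (-1)^j / (t - x j)" 0 k] by simp
  moreover have "\<dots> = - ((-1)^k * (\<Sum>i=0..k. (-1)^i / (x (k - i) - t)))"
    unfolding sum_distrib_left sum_negf[symmetric]
    by (intro sum.cong) (auto simp: neg_one_power_diff divide_diff_flip[of _ _ t])
  moreover have "(\<Sum>j=Suc k..n. (-1)^j / (t - x j)) =
      (\<Sum>i=0..n - Suc k. (-1)^(i + Suc k) / (t - x (i + Suc k)))"
    using sum.shift_bounds_cl_nat_ivl[of "\<lambda>j. (-1)^j / (t - x j)" 0 "Suc k" "n - Suc k"] assms
    by simp
  moreover have "\<dots> = - ((-1)^k * (\<Sum>i=0..n - Suc k. (-1)^i / (t - x (i + Suc k))))"
    unfolding sum_distrib_left sum_negf[symmetric]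
    by (intro sum.cong) (auto simp: power_add)
  ultimately show ?thesis by (simp add: algebra_simps)
qed

lemma frac_le_of_mult:
  fixes a b c d :: real
  assumes "0 < b" "0 < d" "a * d \<le> c * b"
  shows "a / b \<le> c / d"
  using assms by (simp add: field_simps)

lemma bracket_increasing:
  fixes y :: "nat \<Rightarrow> real"
  assumes "y 0 \<le> t" "t < y n"
  shows "\<exists>k<n. y k \<le> t \<and> t < y (Suc k)"
  using assms
proof (induction n)
  case (Suc n)
  show ?case
  proof (cases "y n \<le> t")
    case True
    then show ?thesis using Suc.prems by blast
  next
    case False
    then obtain k where "k < n" "y k \<le> t" "t < y (Suc k)" using Suc by force
    then show ?thesis using less_SucI by blast
  qed
qed simp

section \<open>Nodes with quasi-uniform angles\<close>

locale cosine_nodes =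
  fixes x \<theta> :: "nat \<Rightarrow> real" and n :: nat and u S :: real
  assumes u_pos: "0 < u" and S_nonneg: "0 \<le> S" and n_ge_3: "3 \<le> n"
    and x_eq_cos: "j \<le> n \<Longrightarrow> x j = cos (\<theta> j)"
    and first_angle: "0 \<le> \<theta> 0" "\<theta> 0 \<le> S * u"
    and last_angle: "\<theta> n \<le> pi" "pi - \<theta> n \<le> S * u"
    and gap_ge: "j < n \<Longrightarrow> u \<le> \<theta> (Suc j) - \<theta> j"
    and gap_le: "j < n \<Longrightarrow> \<theta> (Suc j) - \<theta> j \<le> (S + 1) * u"
begin

lemma angle_diff_ge: "i \<le> j \<Longrightarrow> j \<le> n \<Longrightarrow> real (j - i) * u \<le> \<theta> j - \<theta> i"
proof (induction j)
  case (Suc j)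
  show ?case
  proof (cases "i = Suc j")
    case False
    then have "real (j - i) * u \<le> \<theta> j - \<theta> i" "u \<le> \<theta> (Suc j) - \<theta> j"
      using Suc gap_ge[of j] by auto
    moreover have "real (Suc j - i) * u = real (j - i) * u + u"
      using False Suc.prems by (simp add: Suc_diff_le algebra_simps)
    ultimately show ?thesis by linarith
  qed simp
qed simp

lemma angle_mono: "i \<le> j \<Longrightarrow> j \<le> n \<Longrightarrow> \<theta> i \<le> \<theta> j"
  using angle_diff_ge[of i j] u_pos mult_nonneg_nonneg[of "real (j - i)" u] by linarith

lemma angle_bounds: "j \<le> n \<Longrightarrow> 0 \<le> \<theta> j \<and> \<theta> j \<le> pi"
  using angle_mono[of 0 j] angle_mono[of j n] first_angle last_angle by auto

lemma angle_less:
  assumes "i < j" "j \<le> n"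
  shows "\<theta> i < \<theta> j"
proof -
  have "0 < real (j - i) * u" using assms u_pos by simp
  then show ?thesis using angle_diff_ge[of i j] assms by linarith
qed

lemma node_less: "i < j \<Longrightarrow> j \<le> n \<Longrightarrow> x j < x i"
  using angle_less[of i j] angle_bounds[of i] angle_bounds[of j]
  by (simp add: x_eq_cos cos_monotone_0_pi)

lemma angle_position_cases:
  assumes "\<forall>j\<le>n. \<phi> \<noteq> \<theta> j"
  obtains "\<phi> < \<theta> 0" | "\<theta> n < \<phi>" | k where "k < n" "\<theta> k < \<phi>" "\<phi> < \<theta> (Suc k)"
proof (cases "\<phi> < \<theta> 0 \<or> \<theta> n < \<phi>")
  case False
  then have "\<theta> 0 \<le> \<phi>" "\<phi> < \<theta> n" using assms by (auto simp: less_le)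
  then obtain k where k: "k < n" "\<theta> k \<le> \<phi>" "\<phi> < \<theta> (Suc k)"
    using bracket_increasing[of \<theta> \<phi> n] by blast
  then have "\<theta> k < \<phi>" using assms by (auto simp: less_le)
  with k that(3) show ?thesis by blast
qed (use that in blast)

lemma cosine_nodes_reflect: "cosine_nodes (\<lambda>j. - x (n - j)) (\<lambda>j. pi - \<theta> (n - j)) n u S"
proof
  show "j \<le> n \<Longrightarrow> - x (n - j) = cos (pi - \<theta> (n - j))" for j by (simp add: x_eq_cos)
  show "j < n \<Longrightarrow> u \<le> pi - \<theta> (n - Suc j) - (pi - \<theta> (n - j))" for j
    using gap_ge[of "n - Suc j"] by (simp add: Suc_diff_Suc)
  show "j < n \<Longrightarrow> pi - \<theta> (n - Suc j) - (pi - \<theta> (n - j)) \<le> (S + 1) * u" for j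
    using gap_le[of "n - Suc j"] by (simp add: Suc_diff_Suc)
qed (use u_pos S_nonneg n_ge_3 first_angle last_angle in auto)

lemma gap_le_left:
  assumes "j \<le> k" "k < n"
  shows "(x k - x (Suc k)) * (real k + 1 - real j) \<le> pi^2 * (S + 1) / 2 * (x j - x (Suc k))"
proof -
  have nodes: "0 \<le> x k - x (Suc k)" "0 \<le> x j - x (Suc k)"
    using node_less[of k "Suc k"] node_less[of j "Suc k"] assms by auto
  have "(x k - x (Suc k)) * ((real k + 1 - real j) * u) \<le> (x k - x (Suc k)) * (\<theta> (Suc k) - \<theta> j)"
    using angle_diff_ge[of j "Suc k"] assms nodes
    by (intro mult_left_mono) (simp_all add: of_nat_diff algebra_simps)
  also have "\<dots> \<le> pi^2 / 2 * (\<theta> (Suc k) - \<theta> k) * (x j - x (Suc k))"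
    using cos_diff_inner_right[of "\<theta> j" "\<theta> k" "\<theta> (Suc k)"] assms angle_mono angle_bounds
    by (simp add: x_eq_cos)
  also have "\<dots> \<le> pi^2 / 2 * ((S + 1) * u) * (x j - x (Suc k))"
    using gap_le[of k] assms nodes by (intro mult_right_mono mult_left_mono) auto
  finally have "(x k - x (Suc k)) * (real k + 1 - real j) * u
      \<le> pi^2 * (S + 1) / 2 * (x j - x (Suc k)) * u"
    by (simp add: algebra_simps)
  then show ?thesis using u_pos by (rule mult_right_le_imp_le)
qed

lemma gap_le_right:
  assumes "Suc k \<le> j" "j \<le> n"
  shows "(x k - x (Suc k)) * (real j - real k) \<le> pi^2 * (S + 1) / 2 * (x k - x j)"
proof -
  have nodes: "0 \<le> x k - x (Suc k)" "0 \<le> x k - x j"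
    using node_less[of k "Suc k"] node_less[of k j] assms by auto
  have "(x k - x (Suc k)) * ((real j - real k) * u) \<le> (x k - x (Suc k)) * (\<theta> j - \<theta> k)"
    using angle_diff_ge[of k j] assms nodes by (intro mult_left_mono) (simp_all add: of_nat_diff)
  also have "\<dots> \<le> pi^2 / 2 * (\<theta> (Suc k) - \<theta> k) * (x k - x j)"
    using cos_diff_inner_left[of "\<theta> k" "\<theta> (Suc k)" "\<theta> j"] assms angle_mono angle_bounds
    by (simp add: x_eq_cos)
  also have "\<dots> \<le> pi^2 / 2 * ((S + 1) * u) * (x k - x j)"
    using gap_le[of k] assms nodes by (intro mult_right_mono mult_left_mono) auto
  finally have "(x k - x (Suc k)) * (real j - real k) * u \<le> pi^2 * (S + 1) / 2 * (x k - x j) * u"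
    by (simp add: algebra_simps)
  then show ?thesis using u_pos by (rule mult_right_le_imp_le)
qed

lemma gap_ratio:
  assumes "Suc k < n"
  shows "x (Suc k) - x (Suc (Suc k)) \<le> (S + 1) * (S + 3) * pi^2 / 4 * (x k - x (Suc k))"
    and "x k - x (Suc k) \<le> (S + 1) * (S + 3) * pi^2 / 4 * (x (Suc k) - x (Suc (Suc k)))"
  using cos_gap_ratio_le[of "\<theta> k" u S "\<theta> (Suc k)" "\<theta> (Suc (Suc k))"]
    cos_gap_ratio_ge[of "\<theta> k" u S "\<theta> (Suc k)" "\<theta> (Suc (Suc k))"]
    gap_ge[of k] gap_ge[of "Suc k"] gap_le[of k] gap_le[of "Suc k"]
    angle_bounds[of k] angle_bounds[of "Suc (Suc k)"] u_pos S_nonneg assms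
  by (simp_all add: x_eq_cos)

lemma well_spaced: "well_spaced_conds (pi^2 * (S + 1) / 2) ((S + 1) * (S + 3) * pi^2 / 4) x n"
proof -
  define C R where "C = pi^2 * (S + 1) / 2" and "R = (S + 1) * (S + 3) * pi^2 / 4"
  have R_pos: "0 < R" using S_nonneg by (simp add: R_def)
  have "(x (k+1) - x k) / (x (k+1) - x j) \<le> C / (real k + 1 - real j)"
    if "k < n" "j \<le> k" for k j
  proof -
    have "(x k - x (Suc k)) / (x j - x (Suc k)) \<le> C / (real k + 1 - real j)"
      using node_less[of j "Suc k"] gap_le_left[OF that(2,1)] that
      by (intro frac_le_of_mult) (simp_all add: C_def)
    then show ?thesis using minus_divide_divide[of "x k - x (Suc k)" "x j - x (Suc k)"] by simp
  qed
  moreover have "(x (k+1) - x k) / (x j - x k) \<le> C / (real j - real k)"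
    if "k < n" "k + 1 \<le> j" "j \<le> n" for k j
  proof -
    have "(x k - x (Suc k)) / (x k - x j) \<le> C / (real j - real k)"
      using node_less[of k j] gap_le_right[of k j] that
      by (intro frac_le_of_mult) (simp_all add: C_def)
    then show ?thesis using minus_divide_divide[of "x k - x (Suc k)" "x k - x j"] by simp
  qed
  moreover have "1 / R \<le> (x (k+1) - x k) / (x k - x (k-1)) \<and> (x (k+1) - x k) / (x k - x (k-1)) \<le> R"
    if k_range: "1 \<le> k" "k \<le> n - 1" for k
  proof -
    obtain i where k: "k = Suc i" "Suc i < n" using k_range n_ge_3 by (cases k) auto
    have gaps: "0 < x i - x k" "0 < x k - x (Suc k)"
      using node_less[of i k] node_less[of k "Suc k"] k by auto
    have "1 / R \<le> (x k - x (Suc k)) / (x i - x k)"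
      using gaps gap_ratio(2)[OF k(2)] R_pos
      by (intro frac_le_of_mult) (simp_all add: k R_def mult.commute)
    moreover have "(x k - x (Suc k)) / (x i - x k) \<le> R / 1"
      using gaps gap_ratio(1)[OF k(2)] by (intro frac_le_of_mult) (simp_all add: k R_def)
    ultimately show ?thesis using minus_divide_divide[of "x k - x (Suc k)" "x i - x k"] by (simp add: k)
  qed
  ultimately show ?thesis unfolding well_spaced_conds_def C_def R_def by blast
qed

subsection \<open>The Lebesgue constant\<close>

abbreviation lebesgue_bound :: real where
  "lebesgue_bound \<equiv> ((S + 1) * (S + 3) * pi^2 / 4 + 1) * (1 + pi^2 * (S + 1) * ln (real n))"

lemma scaled_harm_le_ln: "pi^2 * S / 2 * harm n \<le> pi^2 * (S + 1) * ln (real n)"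
proof -
  have "harm n \<le> 2 * ln (real n)"
    using harm_le_one_plus_ln[of n] one_le_ln[OF n_ge_3] n_ge_3 by simp
  then have "pi^2 * S / 2 * harm n \<le> pi^2 * S / 2 * (2 * ln (real n))"
    using S_nonneg by (intro mult_left_mono) auto
  also have "\<dots> = pi^2 * S * ln (real n)" by simp
  also have "\<dots> \<le> pi^2 * (S + 1) * ln (real n)"
    using one_le_ln[OF n_ge_3] by (intro mult_right_mono mult_left_mono) auto
  finally show ?thesis .
qed

context
  fixes \<phi> :: real
  assumes beyond: "0 \<le> \<phi>" "\<phi> < \<theta> 0"
begin

lemma beyond_node_lt: "j \<le> n \<Longrightarrow> x j < cos \<phi>"
  using beyond angle_mono[of 0 j] angle_bounds[of j] by (simp add: x_eq_cos cos_monotone_0_pi)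

lemma beyond_denominator_ge:
  "4 / (pi^2 * (S + 1)^2) / (cos \<phi> - x 0) \<le> \<bar>\<Sum>j=0..n. (-1)^j / (cos \<phi> - x j)\<bar>"
proof -
  have x1: "x 1 = cos (\<theta> 1)" using n_ge_3 x_eq_cos by simp
  have "4 / (pi^2 * (S + 1)^2) / (cos \<phi> - x 0) \<le> 1 / (cos \<phi> - x 0) - 1 / (cos \<phi> - x 1)"
    unfolding x_eq_cos[OF le0] x1
  proof (rule cos_recip_gap_ge)
    show "\<theta> 0 - \<phi> \<le> S * (\<theta> 1 - \<theta> 0)"
      using beyond first_angle gap_ge[of 0] S_nonneg n_ge_3 mult_left_mono[of u "\<theta> 1 - \<theta> 0" S]
      by simp
  qed (use beyond angle_less[of 0 1] angle_bounds[of 1] S_nonneg n_ge_3 in auto)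
  moreover have "\<forall>j<n. cos \<phi> - x j < cos \<phi> - x (Suc j)" using node_less by simp
  ultimately have "4 / (pi^2 * (S + 1)^2) / (cos \<phi> - x 0) \<le> (\<Sum>j=0..n. (-1)^j / (cos \<phi> - x j))"
    using alternating_recip_sum_ge[of "\<lambda>j. cos \<phi> - x j" n "4 / (pi^2 * (S + 1)^2)"]
      beyond_node_lt[OF le0] S_nonneg jordan_const_le_one[of S]
    by simp
  then show ?thesis by linarith
qed

lemma beyond_far_le:
  assumes "j \<le> n"
  shows "(cos \<phi> - x 0) * real j \<le> pi^2 * S / 2 * (cos \<phi> - x j)"
proof -
  have e: "0 \<le> cos \<phi> - x 0" "0 \<le> cos \<phi> - x j"
    using beyond_node_lt[OF le0] beyond_node_lt[OF assms] by auto
  have "(cos \<phi> - x 0) * (real j * u) \<le> (cos \<phi> - x 0) * (\<theta> j - \<phi>)"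
    using angle_diff_ge[of 0 j] assms beyond e by (intro mult_left_mono) auto
  also have "\<dots> \<le> pi^2 / 2 * (\<theta> 0 - \<phi>) * (cos \<phi> - x j)"
    using cos_diff_inner_left[of \<phi> "\<theta> 0" "\<theta> j"] assms beyond angle_mono[of 0 j] angle_bounds[of j]
    by (simp add: x_eq_cos)
  also have "\<dots> \<le> pi^2 / 2 * (S * u) * (cos \<phi> - x j)"
    using first_angle beyond e by (intro mult_right_mono mult_left_mono) auto
  finally have "(cos \<phi> - x 0) * real j * u \<le> pi^2 * S / 2 * (cos \<phi> - x j) * u"
    by (simp add: algebra_simps)
  then show ?thesis using u_pos by (rule mult_right_le_imp_le)
qed

lemma lebesgue_fun_le_beyond: "berrut_lebesgue_fun x n (cos \<phi>) \<le> lebesgue_bound"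
proof -
  define c where "c = 4 / (pi^2 * (S + 1)^2)"
  define D where "D = \<bar>\<Sum>j=0..n. (-1)^j / (cos \<phi> - x j)\<bar>"
  have c: "0 < c" using S_nonneg by (simp add: c_def)
  have e: "0 < cos \<phi> - x j" if "j \<le> n" for j using beyond_node_lt[OF that] by simp
  have D: "c / (cos \<phi> - x 0) \<le> D" using beyond_denominator_ge by (simp add: c_def D_def)
  have "berrut_lebesgue_fun x n (cos \<phi>) = (\<Sum>j=0..n. 1 / (cos \<phi> - x j) / D)"
    unfolding berrut_lebesgue_fun_eq D_def[symmetric] sum_divide_distrib
    using e by (intro sum.cong refl) (simp add: less_imp_le)
  also have "\<dots> = 1 / (cos \<phi> - x 0) / D + (\<Sum>j=1..n. 1 / (cos \<phi> - x j) / D)"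
    by (simp add: sum.atLeast_Suc_atMost)
  also have "\<dots> \<le> 1 / c / 1 + (\<Sum>j=1..n. pi^2 * S / 2 / c / real j)"
  proof (intro add_mono sum_mono)
    show "1 / (cos \<phi> - x 0) / D \<le> 1 / c / 1"
      using c e[of 0] D by (intro recip_div_le) auto
    show "1 / (cos \<phi> - x j) / D \<le> pi^2 * S / 2 / c / real j" if "j \<in> {1..n}" for j
      using c e[of 0] e[of j] D beyond_far_le[of j] that by (intro recip_div_le) auto
  qed
  also have "\<dots> \<le> 1 / c / 1 + pi^2 * S / 2 / c * harm n"
    using c S_nonneg sum_scaled_recip_le_harm[of "pi^2 * S / 2 / c" "{1..n}" "\<lambda>j. j" n] by simp
  also have "\<dots> = 1 / c * (1 + pi^2 * S / 2 * harm n)"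
    by (simp add: algebra_simps)
  also have "\<dots> \<le> lebesgue_bound"
  proof (intro mult_mono)
    have "1 / c = pi^2 / 4 * (S + 1)^2" by (simp add: c_def)
    also have "\<dots> \<le> pi^2 / 4 * ((S + 1) * (S + 3))"
      using S_nonneg by (intro mult_left_mono) (auto simp: power2_eq_square)
    also have "\<dots> = (S + 1) * (S + 3) * pi^2 / 4" by simp
    finally show "1 / c \<le> (S + 1) * (S + 3) * pi^2 / 4 + 1" by linarith
    show "1 + pi^2 * S / 2 * harm n \<le> 1 + pi^2 * (S + 1) * ln (real n)"
      using scaled_harm_le_ln by simp
  qed (use c S_nonneg one_le_ln[OF n_ge_3] harm_nonneg[of n]
        in \<open>auto intro!: add_nonneg_nonneg mult_nonneg_nonneg\<close>)
  finally show ?thesis .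
qed

end

lemma between_sum_le_lebesgue_bound:
  "3 * pi^2 * (S + 1) / 8 / (4 / (pi^2 * ((S + 1) / 2 + 1)^2)) * harm n
     + ((S + 1) * (S + 3) * pi^2 / 4 + 1)
     + pi^2 * (S + 1) / 4 / (4 / (pi^2 * ((S + 1) / 2 + 1)^2)) * harm n
   \<le> lebesgue_bound"
proof -
  define P a L where "P = pi^2" and "a = S + 1" and "L = ln (real n)"
  define R where "R = a * (a + 2) * P / 4"
  have a: "1 \<le> a" and P: "0 < P" and L: "1 \<le> L"
    using S_nonneg one_le_ln[OF n_ge_3] by (auto simp: a_def P_def L_def)
  have "harm n \<le> 2 * L"
    using harm_le_one_plus_ln[of n] n_ge_3 L by (simp add: L_def)
  have lhs: "3 * pi^2 * (S + 1) / 8 / (4 / (pi^2 * ((S + 1) / 2 + 1)^2)) * harm n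
      + pi^2 * (S + 1) / 4 / (4 / (pi^2 * ((S + 1) / 2 + 1)^2)) * harm n
      = 5 * P^2 * a * (a + 2)^2 / 128 * harm n"
    by (simp add: P_def a_def power2_eq_square field_simps)
  have "5 * P^2 * a * (a + 2)^2 / 128 * harm n \<le> 5 * P^2 * a * (a + 2)^2 / 128 * (2 * L)"
    using \<open>harm n \<le> 2 * L\<close> a by (intro mult_left_mono) auto
  also have "\<dots> \<le> R * (P * a * L)"
  proof -
    have "R * (P * a * L) - 5 * P^2 * a * (a + 2)^2 / 128 * (2 * L)
        = P^2 * a * (a + 2) * L / 64 * (11 * a - 10)"
      by (simp add: R_def power2_eq_square field_simps)
    moreover have "0 \<le> P^2 * a * (a + 2) * L / 64 * (11 * a - 10)"
      using a P L by (intro mult_nonneg_nonneg) auto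
    ultimately show ?thesis by linarith
  qed
  finally have main: "5 * P^2 * a * (a + 2)^2 / 128 * harm n \<le> R * (P * a * L)" .
  have R_eq: "(S + 1) * (S + 3) * pi^2 / 4 = R" by (simp add: R_def a_def P_def algebra_simps)
  have "(R + 1) * (1 + P * a * L) = R + 1 + R * (P * a * L) + P * a * L"
    by (simp add: algebra_simps)
  moreover have "0 \<le> P * a * L" using a P L by simp
  ultimately show ?thesis unfolding R_eq using lhs main unfolding P_def a_def L_def by linarith
qed

context
  fixes k :: nat and \<phi> :: real
  assumes k_less: "k < n" and between: "\<theta> k < \<phi>" "\<phi> < \<theta> (Suc k)"
    and closer_right: "\<theta> (Suc k) - \<phi> \<le> \<phi> - \<theta> k"
begin

lemma left_node_gt: "j \<le> k \<Longrightarrow> cos \<phi> < x j"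
  using angle_mono[of j k] angle_bounds[of j] angle_bounds[of "Suc k"] between k_less
  by (simp add: x_eq_cos cos_monotone_0_pi)

lemma right_node_lt: "Suc k \<le> j \<Longrightarrow> j \<le> n \<Longrightarrow> x j < cos \<phi>"
  using angle_mono[of "Suc k" j] angle_bounds[of j] angle_bounds[of k] between
  by (simp add: x_eq_cos cos_monotone_0_pi)

lemma left_sum_ge:
  assumes "0 \<le> c" "c \<le> 1"
    and "0 < k \<Longrightarrow> c / (x k - cos \<phi>) \<le> 1 / (x k - cos \<phi>) - 1 / (x (k - 1) - cos \<phi>)"
  shows "c / (x k - cos \<phi>) \<le> (\<Sum>i=0..k. (-1)^i / (x (k - i) - cos \<phi>))"
proof -
  have "\<forall>i<k. x (k - i) - cos \<phi> < x (k - Suc i) - cos \<phi>"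
    using node_less k_less by (auto simp: Suc_diff_Suc)
  then show ?thesis
    using alternating_recip_sum_ge[of "\<lambda>i. x (k - i) - cos \<phi>" k c] assms left_node_gt[of k]
    by simp
qed

lemma right_sum_ge:
  assumes "0 \<le> c" "c \<le> 1"
    and "Suc k < n \<Longrightarrow> c / (cos \<phi> - x (Suc k))
           \<le> 1 / (cos \<phi> - x (Suc k)) - 1 / (cos \<phi> - x (Suc (Suc k)))"
  shows "c / (cos \<phi> - x (Suc k)) \<le> (\<Sum>i=0..n - Suc k. (-1)^i / (cos \<phi> - x (i + Suc k)))"
proof -
  have "\<forall>i<n - Suc k. cos \<phi> - x (i + Suc k) < cos \<phi> - x (Suc i + Suc k)"
    using node_less by auto
  then show ?thesis
    using alternating_recip_sum_ge[of "\<lambda>i. cos \<phi> - x (i + Suc k)" "n - Suc k" c]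
      assms right_node_lt[of "Suc k"] k_less
    by simp
qed

lemma left_sum_nonneg: "0 \<le> (\<Sum>i=0..k. (-1)^i / (x (k - i) - cos \<phi>))"
proof -
  have "0 / (x k - cos \<phi>) \<le> (\<Sum>i=0..k. (-1)^i / (x (k - i) - cos \<phi>))"
  proof (rule left_sum_ge)
    assume "0 < k"
    then have "1 / (x (k - 1) - cos \<phi>) \<le> 1 / (x k - cos \<phi>)"
      using left_node_gt[of k] node_less[of "k - 1" k] k_less by (intro divide_left_mono) auto
    then show "0 / (x k - cos \<phi>) \<le> 1 / (x k - cos \<phi>) - 1 / (x (k - 1) - cos \<phi>)" by simp
  qed auto
  then show ?thesis by simp
qed

lemma right_sum_nonneg: "0 \<le> (\<Sum>i=0..n - Suc k. (-1)^i / (cos \<phi> - x (i + Suc k)))"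
proof -
  have "0 / (cos \<phi> - x (Suc k)) \<le> (\<Sum>i=0..n - Suc k. (-1)^i / (cos \<phi> - x (i + Suc k)))"
  proof (rule right_sum_ge)
    assume "Suc k < n"
    then have "1 / (cos \<phi> - x (Suc (Suc k))) \<le> 1 / (cos \<phi> - x (Suc k))"
      using right_node_lt[of "Suc k"] node_less[of "Suc k" "Suc (Suc k)"] by (intro divide_left_mono) auto
    then show "0 / (cos \<phi> - x (Suc k))
        \<le> 1 / (cos \<phi> - x (Suc k)) - 1 / (cos \<phi> - x (Suc (Suc k)))" by simp
  qed auto
  then show ?thesis by simp
qed

lemma abs_denominator_eq:
  "\<bar>\<Sum>j=0..n. (-1)^j / (cos \<phi> - x j)\<bar>
     = (\<Sum>i=0..k. (-1)^i / (x (k - i) - cos \<phi>))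
       + (\<Sum>i=0..n - Suc k. (-1)^i / (cos \<phi> - x (i + Suc k)))"
  using berrut_denominator_split[OF k_less, of "cos \<phi>" x] left_sum_nonneg right_sum_nonneg
  by (simp add: abs_mult power_abs)

lemma near_terms_le:
  "(1 / (x k - cos \<phi>) + 1 / (cos \<phi> - x (Suc k))) / \<bar>\<Sum>j=0..n. (-1)^j / (cos \<phi> - x j)\<bar>
     \<le> (S + 1) * (S + 3) * pi^2 / 4 + 1"
proof -
  define R where "R = (S + 1) * (S + 3) * pi^2 / 4"
  have "0 \<le> R" using S_nonneg by (simp add: R_def)
  then have R: "0 \<le> R" "0 < R + 1" by auto
  have gap_k: "0 < x k - x (Suc k)" using node_less[of k "Suc k"] k_less by simp
  have "1 / (R + 1) / (x k - cos \<phi>) \<le> (\<Sum>i=0..k. (-1)^i / (x (k - i) - cos \<phi>))"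
  proof (rule left_sum_ge)
    assume "0 < k"
    have "x k - cos \<phi> \<le> R * (x (k - 1) - x k)"
      using gap_ratio(1)[of "k - 1"] right_node_lt[of "Suc k"] k_less \<open>0 < k\<close>
      by (simp add: R_def)
    then show "1 / (R + 1) / (x k - cos \<phi>) \<le> 1 / (x k - cos \<phi>) - 1 / (x (k - 1) - cos \<phi>)"
      using recip_diff_ge[of "x k - cos \<phi>" "x (k - 1) - x k" R] R \<open>0 < k\<close>
        left_node_gt[of k] node_less[of "k - 1" k] k_less
      by simp
  qed (use R in auto)
  moreover have "1 / (R + 1) / (cos \<phi> - x (Suc k))
      \<le> (\<Sum>i=0..n - Suc k. (-1)^i / (cos \<phi> - x (i + Suc k)))"
  proof (rule right_sum_ge)
    assume k2: "Suc k < n"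
    have "cos \<phi> - x (Suc k) \<le> R * (x (Suc k) - x (Suc (Suc k)))"
      using gap_ratio(2)[OF k2] left_node_gt[of k] by (simp add: R_def)
    then show "1 / (R + 1) / (cos \<phi> - x (Suc k))
        \<le> 1 / (cos \<phi> - x (Suc k)) - 1 / (cos \<phi> - x (Suc (Suc k)))"
      using recip_diff_ge[of "cos \<phi> - x (Suc k)" "x (Suc k) - x (Suc (Suc k))" R] R
        right_node_lt[of "Suc k"] node_less[of "Suc k" "Suc (Suc k)"] k2
      by simp
  qed (use R in auto)
  ultimately have "1 / (R + 1) / (x k - cos \<phi>) + 1 / (R + 1) / (cos \<phi> - x (Suc k))
      \<le> \<bar>\<Sum>j=0..n. (-1)^j / (cos \<phi> - x j)\<bar>"
    unfolding abs_denominator_eq by (rule add_mono)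
  then have "(1 / (x k - cos \<phi>) + 1 / (cos \<phi> - x (Suc k))) / (R + 1)
      \<le> \<bar>\<Sum>j=0..n. (-1)^j / (cos \<phi> - x j)\<bar>"
    by (simp add: add_divide_distrib ac_simps)
  then have le: "1 / (x k - cos \<phi>) + 1 / (cos \<phi> - x (Suc k))
      \<le> \<bar>\<Sum>j=0..n. (-1)^j / (cos \<phi> - x j)\<bar> * (R + 1)"
    using R by (simp add: divide_le_eq)
  have "0 < 1 / (x k - cos \<phi>) + 1 / (cos \<phi> - x (Suc k))"
    using left_node_gt[of k] right_node_lt[of "Suc k"] k_less by (simp add: add_pos_pos)
  then have "0 < \<bar>\<Sum>j=0..n. (-1)^j / (cos \<phi> - x j)\<bar> * (R + 1)"
    using le by linarith
  then have "0 < \<bar>\<Sum>j=0..n. (-1)^j / (cos \<phi> - x j)\<bar>"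
    using R by (simp add: zero_less_mult_iff)
  then show ?thesis
    unfolding R_def[symmetric] using le by (simp add: pos_divide_le_eq mult.commute)
qed

lemma near_angle_le: "\<theta> (Suc k) - \<phi> \<le> (S + 1) * u / 2"
  using closer_right gap_le[OF k_less] by simp

lemma abs_denominator_ge_far:
  "4 / (pi^2 * ((S + 1) / 2 + 1)^2) / (cos \<phi> - x (Suc k))
     \<le> \<bar>\<Sum>j=0..n. (-1)^j / (cos \<phi> - x j)\<bar>"
proof -
  have "4 / (pi^2 * ((S + 1) / 2 + 1)^2) / (cos \<phi> - x (Suc k))
      \<le> (\<Sum>i=0..n - Suc k. (-1)^i / (cos \<phi> - x (i + Suc k)))"
  proof (rule right_sum_ge)
    assume k2: "Suc k < n"
    have "(S + 1) * u / 2 \<le> (S + 1) / 2 * (\<theta> (Suc (Suc k)) - \<theta> (Suc k))"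
      using gap_ge[OF k2] S_nonneg mult_left_mono[of u _ "(S + 1) / 2"] by simp
    then have "\<theta> (Suc k) - \<phi> \<le> (S + 1) / 2 * (\<theta> (Suc (Suc k)) - \<theta> (Suc k))"
      using near_angle_le by linarith
    then show "4 / (pi^2 * ((S + 1) / 2 + 1)^2) / (cos \<phi> - x (Suc k))
        \<le> 1 / (cos \<phi> - x (Suc k)) - 1 / (cos \<phi> - x (Suc (Suc k)))"
      using cos_recip_gap_ge[of \<phi> "\<theta> (Suc k)" "\<theta> (Suc (Suc k))" "(S + 1) / 2"]
        between k2 angle_less[of "Suc k" "Suc (Suc k)"] angle_bounds[of k] angle_bounds[of "Suc (Suc k)"]
        S_nonneg
      by (simp add: x_eq_cos)
  qed (use S_nonneg jordan_const_le_one[of "(S + 1) / 2"] in auto)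
  then show ?thesis using abs_denominator_eq left_sum_nonneg by linarith
qed

lemma left_far_le:
  assumes "j < k"
  shows "(cos \<phi> - x (Suc k)) * real (k - j) \<le> 3 * pi^2 * (S + 1) / 8 * (x j - cos \<phi>)"
proof -
  have e: "0 \<le> cos \<phi> - x (Suc k)" "0 \<le> x j - cos \<phi>"
    using right_node_lt[of "Suc k"] left_node_gt[of j] assms k_less by auto
  have "(cos \<phi> - x (Suc k)) * (real (k - j) * u) \<le> (cos \<phi> - x (Suc k)) * (\<phi> - \<theta> j)"
    using angle_diff_ge[of j k] assms between k_less e by (intro mult_left_mono) auto
  also have "\<dots> \<le> 3 * pi^2 / 4 * (\<theta> (Suc k) - \<phi>) * (x j - cos \<phi>)"
    using cos_diff_far_left[of "\<theta> j" \<phi> "\<theta> (Suc k)"] assms between closer_right k_less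
      angle_mono[of j k] angle_bounds[of j] angle_bounds[of "Suc k"]
    by (simp add: x_eq_cos)
  also have "\<dots> \<le> 3 * pi^2 / 4 * ((S + 1) * u / 2) * (x j - cos \<phi>)"
    using near_angle_le e between by (intro mult_right_mono mult_left_mono) auto
  finally have "(cos \<phi> - x (Suc k)) * real (k - j) * u \<le> 3 * pi^2 * (S + 1) / 8 * (x j - cos \<phi>) * u"
    by (simp add: algebra_simps)
  then show ?thesis using u_pos by (rule mult_right_le_imp_le)
qed

lemma right_far_le:
  assumes "Suc (Suc k) \<le> j" "j \<le> n"
  shows "(cos \<phi> - x (Suc k)) * real (j - Suc k) \<le> pi^2 * (S + 1) / 4 * (cos \<phi> - x j)"
proof -
  have e: "0 \<le> cos \<phi> - x (Suc k)" "0 \<le> cos \<phi> - x j"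
    using right_node_lt[of "Suc k"] right_node_lt[of j] assms by auto
  have "(cos \<phi> - x (Suc k)) * (real (j - Suc k) * u) \<le> (cos \<phi> - x (Suc k)) * (\<theta> j - \<phi>)"
    using angle_diff_ge[of "Suc k" j] assms between e by (intro mult_left_mono) auto
  also have "\<dots> \<le> pi^2 / 2 * (\<theta> (Suc k) - \<phi>) * (cos \<phi> - x j)"
    using cos_diff_inner_left[of \<phi> "\<theta> (Suc k)" "\<theta> j"] assms between
      angle_mono[of "Suc k" j] angle_bounds[of k] angle_bounds[of j]
    by (simp add: x_eq_cos)
  also have "\<dots> \<le> pi^2 / 2 * ((S + 1) * u / 2) * (cos \<phi> - x j)"
    using near_angle_le e between by (intro mult_right_mono mult_left_mono) auto
  finally have "(cos \<phi> - x (Suc k)) * real (j - Suc k) * u \<le> pi^2 * (S + 1) / 4 * (cos \<phi> - x j) * u"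
    by (simp add: algebra_simps)
  then show ?thesis using u_pos by (rule mult_right_le_imp_le)
qed

lemma lebesgue_fun_le_between:
  "berrut_lebesgue_fun x n (cos \<phi>) \<le> lebesgue_bound"
proof -
  define D where "D = \<bar>\<Sum>j=0..n. (-1)^j / (cos \<phi> - x j)\<bar>"
  define c where "c = 4 / (pi^2 * ((S + 1) / 2 + 1)^2)"
  define e where "e = cos \<phi> - x (Suc k)"
  have "0 < (S + 1) / 2 + 1" using S_nonneg by (simp add: field_simps)
  then have c: "0 < c" by (simp add: c_def)
  have e: "0 < e" and D: "c / e \<le> D"
    using right_node_lt[of "Suc k"] k_less abs_denominator_ge_far by (auto simp: c_def e_def D_def)
  have "berrut_lebesgue_fun x n (cos \<phi>) = (\<Sum>j=0..n. 1 / \<bar>cos \<phi> - x j\<bar> / D)"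
    unfolding berrut_lebesgue_fun_eq D_def sum_divide_distrib ..
  also have "\<dots> = (\<Sum>j=0..<k. 1 / (x j - cos \<phi>) / D)
      + (1 / (x k - cos \<phi>) + 1 / (cos \<phi> - x (Suc k))) / D
      + (\<Sum>j=Suc (Suc k)..n. 1 / (cos \<phi> - x j) / D)"
  proof -
    have "\<bar>cos \<phi> - x j\<bar> = x j - cos \<phi>" if "j \<le> k" for j
      using left_node_gt[OF that] by simp
    moreover have "\<bar>cos \<phi> - x j\<bar> = cos \<phi> - x j" if "Suc k \<le> j" "j \<le> n" for j
      using right_node_lt[OF that] by simp
    ultimately show ?thesis
      unfolding sum_split_pair[OF k_less] using k_less by (auto simp: add_divide_distrib intro!: sum.cong)
  qed
  also have "\<dots> \<le> (\<Sum>j=0..<k. 3 * pi^2 * (S + 1) / 8 / c / real (k - j))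
      + ((S + 1) * (S + 3) * pi^2 / 4 + 1)
      + (\<Sum>j=Suc (Suc k)..n. pi^2 * (S + 1) / 4 / c / real (j - Suc k))"
  proof (intro add_mono sum_mono)
    show "1 / (x j - cos \<phi>) / D \<le> 3 * pi^2 * (S + 1) / 8 / c / real (k - j)"
      if "j \<in> {0..<k}" for j
      using that c e D left_node_gt[of j] left_far_le[of j] by (intro recip_div_le) (auto simp: e_def)
    show "1 / (cos \<phi> - x j) / D \<le> pi^2 * (S + 1) / 4 / c / real (j - Suc k)"
      if "j \<in> {Suc (Suc k)..n}" for j
      using that c e D right_node_lt[of j] right_far_le[of j] by (intro recip_div_le) (auto simp: e_def)
  qed (use near_terms_le in \<open>simp add: D_def\<close>)
  also have "\<dots> \<le> 3 * pi^2 * (S + 1) / 8 / c * harm n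
      + ((S + 1) * (S + 3) * pi^2 / 4 + 1) + pi^2 * (S + 1) / 4 / c * harm n"
    using c S_nonneg k_less
    by (intro add_mono order.refl sum_scaled_recip_le_harm) (auto simp: inj_on_def)
  also have "\<dots> \<le> lebesgue_bound"
    unfolding c_def by (rule between_sum_le_lebesgue_bound)
  finally show ?thesis .
qed

end

lemma lebesgue_fun_le:
  assumes "0 \<le> \<phi>" "\<phi> \<le> pi" "\<forall>j\<le>n. \<phi> \<noteq> \<theta> j"
  shows "berrut_lebesgue_fun x n (cos \<phi>) \<le> lebesgue_bound"
proof -
  interpret mirror: cosine_nodes "\<lambda>j. - x (n - j)" "\<lambda>j. pi - \<theta> (n - j)" n u S
    by (rule cosine_nodes_reflect)
  have mirror_eq:
    "berrut_lebesgue_fun (\<lambda>j. - x (n - j)) n (cos (pi - \<phi>)) = berrut_lebesgue_fun x n (cos \<phi>)"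
    using berrut_lebesgue_fun_reflect[of x n "cos \<phi>"] by simp
  from assms(3) show ?thesis
  proof (cases rule: angle_position_cases)
    case 1
    then show ?thesis by (rule lebesgue_fun_le_beyond[OF assms(1)])
  next
    case 2
    then have "berrut_lebesgue_fun (\<lambda>j. - x (n - j)) n (cos (pi - \<phi>)) \<le> lebesgue_bound"
      using assms by (intro mirror.lebesgue_fun_le_beyond) auto
    then show ?thesis using mirror_eq by simp
  next
    case (3 k)
    show ?thesis
    proof (cases "\<theta> (Suc k) - \<phi> \<le> \<phi> - \<theta> k")
      case True
      then show ?thesis using 3 by (intro lebesgue_fun_le_between)
    next
      case False
      have idx: "n - (n - Suc k) = Suc k" "n - Suc (n - Suc k) = k" "n - Suc k < n"
        using \<open>k < n\<close> by auto
      have "berrut_lebesgue_fun (\<lambda>j. - x (n - j)) n (cos (pi - \<phi>)) \<le> lebesgue_bound"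
      proof (rule mirror.lebesgue_fun_le_between[of "n - Suc k"], unfold idx)
        show "pi - \<theta> (Suc k) < pi - \<phi>" "pi - \<phi> < pi - \<theta> k"
          "pi - \<theta> k - (pi - \<phi>) \<le> pi - \<phi> - (pi - \<theta> (Suc k))"
          using 3 False by auto
      qed (rule idx(3))
      then show ?thesis using mirror_eq by simp
    qed
  qed
qed

lemma lebesgue_const_le: "berrut_lebesgue_const x n \<le> lebesgue_bound"
  unfolding berrut_lebesgue_const_def
proof (rule cSup_least)
  have "\<not> {-1..1::real} \<subseteq> x ` {0..n}"
  proof
    assume "{-1..1::real} \<subseteq> x ` {0..n}"
    then have "finite {-1..1::real}" by (rule finite_subset) simp
    then show False using infinite_Icc[of "-1::real" 1] by simp
  qed
  then show "berrut_lebesgue_fun x n ` ({-1..1} - x ` {0..n}) \<noteq> {}" by auto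
next
  fix y assume "y \<in> berrut_lebesgue_fun x n ` ({-1..1} - x ` {0..n})"
  then obtain t where t: "-1 \<le> t" "t \<le> 1" "t \<notin> x ` {0..n}" and y: "y = berrut_lebesgue_fun x n t"
    by auto
  have "\<forall>j\<le>n. arccos t \<noteq> \<theta> j"
  proof (intro allI impI notI)
    fix j assume "j \<le> n" "arccos t = \<theta> j"
    then have "t = x j" using t cos_arccos[of t] by (simp add: x_eq_cos)
    then show False using t \<open>j \<le> n\<close> by auto
  qed
  then have "berrut_lebesgue_fun x n (cos (arccos t)) \<le> lebesgue_bound"
    using t by (intro lebesgue_fun_le arccos_lbound arccos_ubound) auto
  then show "y \<le> lebesgue_bound" using t y by simp
qed

end

section \<open>Subsets of Chebyshev points\<close>

lemma strict_mono_nat_gap: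
  fixes p :: "nat \<Rightarrow> nat"
  assumes "\<forall>j<n. p j < p (Suc j)" "i \<le> j" "j \<le> n"
  shows "p i + (j - i) \<le> p j"
  using assms(2,3)
proof (induction j)
  case (Suc j)
  show ?case
  proof (cases "i = Suc j")
    case False
    then have "p i + (j - i) \<le> p j" "p j < p (Suc j)" using Suc assms(1) by auto
    then show ?thesis using False Suc.prems by linarith
  qed simp
qed simp

lemma strict_mono_nat_bounds:
  fixes p :: "nat \<Rightarrow> nat"
  assumes "\<forall>j<n. p j < p (Suc j)" "p n \<le> n + s"
  shows "p 0 \<le> s" "n \<le> p n" "j < n \<Longrightarrow> p (Suc j) \<le> p j + (s + 1)"
  using strict_mono_nat_gap[OF assms(1), of 0 n] strict_mono_nat_gap[OF assms(1), of "Suc j" n]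
    strict_mono_nat_gap[OF assms(1), of 0 j] assms(2)
  by auto

lemma chebyshev_subset_cosine_nodes:
  assumes "s + 2 < N" "n = N - s"
    and nodes: "\<forall>j\<le>n. \<exists>k\<le>N. x j = cos (real k * pi / real N)"
    and decreasing: "\<forall>j<n. x (Suc j) < x j"
  obtains \<theta> where "cosine_nodes x \<theta> n (pi / real N) (real s)"
proof -
  define u where "u = pi / real N"
  have N: "N = n + s" and u: "0 < u" and pi_eq: "pi = real N * u"
    using assms(1,2) by (auto simp: u_def)
  obtain p where p: "\<And>j. j \<le> n \<Longrightarrow> p j \<le> N \<and> x j = cos (real (p j) * u)"
    using nodes choice[of "\<lambda>j k. j \<le> n \<longrightarrow> k \<le> N \<and> x j = cos (real k * pi / real N)"]
    by (auto simp: u_def)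
  define \<theta> where "\<theta> j = real (p j) * u" for j
  have range: "0 \<le> \<theta> j \<and> \<theta> j \<le> pi" if "j \<le> n" for j
    using p[OF that] u by (auto simp: \<theta>_def pi_eq intro: mult_right_mono)
  have p_less: "\<forall>j<n. p j < p (Suc j)"
  proof (intro allI impI)
    fix j assume "j < n"
    then have "cos (\<theta> (Suc j)) < cos (\<theta> j)"
      using decreasing[rule_format, of j] p[of j] p[of "Suc j"] by (simp add: \<theta>_def)
    then have "\<theta> j < \<theta> (Suc j)"
      using range[of j] range[of "Suc j"] \<open>j < n\<close> cos_mono_less_eq[of "\<theta> (Suc j)" "\<theta> j"]
      by auto
    then show "p j < p (Suc j)" using u by (simp add: \<theta>_def)
  qed
  have "p n \<le> n + s" using p[of n] N by simp
  note p0 = strict_mono_nat_bounds(1)[OF p_less this]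
    and pn = strict_mono_nat_bounds(2)[OF p_less this]
    and p_step = strict_mono_nat_bounds(3)[OF p_less this]
  have step_eq: "\<theta> (Suc j) - \<theta> j = (real (p (Suc j)) - real (p j)) * u" for j
    by (simp add: \<theta>_def algebra_simps)
  show thesis
  proof (rule that, unfold_locales)
    show "0 < pi / real N" using u by (simp add: u_def)
    show "3 \<le> n" using N assms(1) by simp
    show "x j = cos (\<theta> j)" if "j \<le> n" for j using p[OF that] by (simp add: \<theta>_def)
    show "0 \<le> \<theta> 0" "\<theta> n \<le> pi" using range by auto
    show "\<theta> 0 \<le> real s * (pi / real N)"
      using p0 u by (simp add: \<theta>_def u_def[symmetric] mult_right_mono)
    have "real N - real (p n) \<le> real s" using pn N by simp
    then show "pi - \<theta> n \<le> real s * (pi / real N)"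
      using u unfolding u_def[symmetric] \<theta>_def pi_eq
      by (simp add: left_diff_distrib[symmetric] mult_right_mono)
    show "pi / real N \<le> \<theta> (Suc j) - \<theta> j" if "j < n" for j
    proof -
      have "p j + 1 \<le> p (Suc j)" using p_less that by (simp add: Suc_le_eq)
      then have "1 * u \<le> (real (p (Suc j)) - real (p j)) * u"
        using u by (intro mult_right_mono) (simp_all add: of_nat_le_iff[symmetric])
      then show ?thesis unfolding u_def[symmetric] step_eq by simp
    qed
    show "\<theta> (Suc j) - \<theta> j \<le> (real s + 1) * (pi / real N)" if "j < n" for j
      using p_step[OF that] u unfolding u_def[symmetric] step_eq by (simp add: mult_right_mono)
  qed simp
qed

theorem theorem7:
  fixes s N n :: nat and x :: "nat \<Rightarrow> real"
  assumes "s + 2 < N"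
    and "n = N - s"
    and "\<forall>j\<le>n. \<exists>k\<le>N. x j = cos (real k * pi / real N)"
    and "\<forall>j<n. x (Suc j) < x j"
  shows "well_spaced_conds (pi^2 * (real s + 1) / 2)
           ((real s + 1) * (real s + 3) * pi^2 / 4) x n
       \<and> berrut_lebesgue_const x n
           \<le> ((real s + 1) * (real s + 3) * pi^2 / 4 + 1)
             * (1 + pi^2 * (real s + 1) * ln (real N - real s))"
proof -
  obtain \<theta> where "cosine_nodes x \<theta> n (pi / real N) (real s)"
    using chebyshev_subset_cosine_nodes[OF assms] .
  then interpret cosine_nodes x \<theta> n "pi / real N" "real s" .
  have "real N - real s = real n" using assms(1,2) by simp
  then show ?thesis using well_spaced lebesgue_const_le by simp
qed

end
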